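(* Let $\widehat{\mathcal{G}}$ be a simple directed graph on $N$ vertices with adjacency matrix $A=A(\widehat{\mathcal{G}})\in\mathbb{R}^{N\times N}$, where $A_{ij}=1$ if there is an edge from $j$ to $i$ and $A_{ij}=0$ otherwise, and with vertices ordered so that the zero columns of $A$ (corresponding to the sinks) are the last columns. Let $\Pi_0=\{\mathcal{T}^{(0)}_1,\dots,\mathcal{T}^{(0)}_{|\Pi_0|}\}$, $|\Pi_0|=N-|\mathcal{S}_{\mathrm{in}}(\widehat{\mathcal{G}})|$, where $\mathcal{T}^{(0)}_k$ is the pseudotree consisting of vertex $k$, all out-neighbors of $k$, and all edges from $k$ to its out-neighbors. For $i,j\in\{1,\dots,|\Pi_0|\}$ let $$a_{ij}=\big([A+I\mathfrak{i}]_{\star i}\big)^\top[A+I\mathfrak{i}]_{\star j},$$ where $\mathfrak{i}$ is the imaginary unit and $[\,\cdot\,]_{\star i}$ denotes the $i$-th column (plain transpose, no conjugation). Then the characteristic matrix $\mathscr{M}^{(0)}$ of $\Pi_0$ satisfies $\mathscr{M}^{(0)}_{ii}=0$ for all $i$, and for $j\ne i$: $\mathscr{M}^{(0)}_{ij}=1$ if $\operatorname{Re}(a_{ij})=0$, $\operatorname{Im}(a_{ij})\ne0$ and $A_{ij}\ne0$; $\mathscr{M}^{(0)}_{ij}=0$ if $\operatorname{Re}(a_{ij})\ne0$, or if ($\operatorname{Re}(a_{ij})=0$, $\operatorname{Im}(a_{ij})\ne0$ and $A_{ij}=0$); $\mathscr{M}^{(0)}_{ij}=\varnothing$ if $a_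{ij}=0$.
   Context: $\mathcal{S}_{\mathrm{in}}(\widehat{\mathcal{G}})$ is the set of sinks (vertices with no out-neighbors). A pseudotree is a connected (underlying undirected graph connected) simple directed graph $\mathcal{T}$ with $|V(\mathcal{T})|\ge2$ in which every vertex has at most one in-neighbor in $\mathcal{T}$; a root of $\mathcal{T}$ is a vertex from which there is exactly one directed path to every other vertex of $\mathcal{T}$, and $\Upsilon(\mathcal{T})$ is the set of roots. Two pseudotree subgraphs $\mathcal{T}_1,\mathcal{T}_2$ are disjoint if $E(\mathcal{T}_1)\cap E(\mathcal{T}_2)=\emptyset$ and for every vertex $j\in V(\mathcal{T}_1)\cup V(\mathcal{T}_2)$ the edges of $E(\mathcal{T}_1)\cup E(\mathcal{T}_2)$ leaving $j$ all lie in one of $E(\mathcal{T}_1)$, $E(\mathcal{T}_2)$. Mergeability: for two disjoint pseudotrees $\mathcal{T}_1,\mathcal{T}_2$ with $V(\mathcal{T}_1)\cap V(\mathcal{T}_2)\ne\emptyset$, $\mathcal{T}_1$ is mergeable to $\mathcal{T}_2$ if the union graph $(V(\mathcal{T}_1)\cup V(\mathcal{T}_2),E(\mathcal{T}_1)\cup E(\mathcal{T}_2))$ is a pseudotree and there is a directed path from every vertex of $\Upsilon(\mathcal{T}_2)$ to every vertex of $V(\mathcal{T}_1)$. Characteristic matrix: for a disjoint pseudotree covering $\Pi=\{\mathcal{T}_1,\dots,\mathcal{T}_n\}$ of a directed graph, its characteristic matrix $\mathscr{M}\in\{1,0,\varnothing\}^{n\times n}$ has $\mathscr{M}_{ij}=1$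 if $\mathcal{T}_i$ is mergeable to $\mathcal{T}_j$, $\mathscr{M}_{ij}=\varnothing$ (a formal symbol) if $V(\mathcal{T}_j)\cap V(\mathcal{T}_i)=\emptyset$, and $\mathscr{M}_{ij}=0$ otherwise. *)

theory Defs
  imports Complex_Main
begin

text \<open>Directed graphs on vertices of type nat: a graph is a pair (V, E) of a vertex set
  and an edge set, where (u, v) \<in> E means an edge from u to v.\<close>

type_synonym dgraph = "nat set \<times> (nat \<times> nat) set"

definition simple_dgraph :: "dgraph \<Rightarrow> bool" where
  "simple_dgraph G \<longleftrightarrow> finite (fst G) \<and> snd G \<subseteq> fst G \<times> fst G \<and> (\<forall>v. (v, v) \<notin> snd G)"

definition weakly_connected :: "dgraph \<Rightarrow> bool" where
  "weakly_connected G \<longleftrightarrow> (\<forall>u\<in>fst G. \<forall>v\<in>fst G. (u, v) \<in> (snd G \<union> (snd G)\<inverse>)\<^sup>*)"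

definition dpath :: "(nat \<times> nat) set \<Rightarrow> nat list \<Rightarrow> bool" where
  "dpath E xs \<longleftrightarrow> xs \<noteq> [] \<and> distinct xs \<and> (\<forall>i. Suc i < length xs \<longrightarrow> (xs ! i, xs ! Suc i) \<in> E)"

definition pseudotree :: "dgraph \<Rightarrow> bool" where
  "pseudotree T \<longleftrightarrow> simple_dgraph T \<and> weakly_connected T \<and> card (fst T) \<ge> 2 \<and>
     (\<forall>v\<in>fst T. card {u. (u, v) \<in> snd T} \<le> 1)"

definition roots :: "dgraph \<Rightarrow> nat set" where
  "roots T = {r \<in> fst T. \<forall>v\<in>fst T. v \<noteq> r \<longrightarrow>
      (\<exists>!xs. dpath (snd T) xs \<and> hd xs = r \<and> last xs = v)}"

definition disjoint_pt :: "dgraph \<Rightarrow> dgraph \<Rightarrow> bool" where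
  "disjoint_pt T1 T2 \<longleftrightarrow> snd T1 \<inter> snd T2 = {} \<and>
     (\<forall>j \<in> fst T1 \<union> fst T2.
        {e \<in> snd T1 \<union> snd T2. fst e = j} \<subseteq> snd T1 \<or>
        {e \<in> snd T1 \<union> snd T2. fst e = j} \<subseteq> snd T2)"

definition graph_union :: "dgraph \<Rightarrow> dgraph \<Rightarrow> dgraph" where
  "graph_union T1 T2 = (fst T1 \<union> fst T2, snd T1 \<union> snd T2)"

definition mergeable :: "dgraph \<Rightarrow> dgraph \<Rightarrow> bool" where
  "mergeable T1 T2 \<longleftrightarrow> pseudotree T1 \<and> pseudotree T2 \<and> disjoint_pt T1 T2 \<and>
     fst T1 \<inter> fst T2 \<noteq> {} \<and> pseudotree (graph_union T1 T2) \<and>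
     (\<forall>r\<in>roots T2. \<forall>v\<in>fst T1.
        \<exists>xs. dpath (snd (graph_union T1 T2)) xs \<and> hd xs = r \<and> last xs = v)"

datatype cm_entry = CM_One | CM_Zero | CM_Empty

definition char_entry :: "dgraph \<Rightarrow> dgraph \<Rightarrow> cm_entry" where
  "char_entry Ti Tj = (if mergeable Ti Tj then CM_One
      else if fst Tj \<inter> fst Ti = {} then CM_Empty else CM_Zero)"

text \<open>Graph on vertices 0..N-1 (0-indexed) given by an edge set E.\<close>
definition adj :: "(nat \<times> nat) set \<Rightarrow> nat \<Rightarrow> nat \<Rightarrow> real" where
  "adj E i j = (if (j, i) \<in> E then 1 else 0)"

definition sinks :: "nat \<Rightarrow> (nat \<times> nat) set \<Rightarrow> nat set" where
  "sinks N E = {v. v < N \<and> (\<forall>u. (v, u) \<notin> E)}"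

definition star_pt :: "(nat \<times> nat) set \<Rightarrow> nat \<Rightarrow> dgraph" where
  "star_pt E k = ({k} \<union> {v. (k, v) \<in> E}, {(k, v) | v. (k, v) \<in> E})"

definition aval :: "nat \<Rightarrow> (nat \<times> nat) set \<Rightarrow> nat \<Rightarrow> nat \<Rightarrow> complex" where
  "aval N E i j = (\<Sum>k<N. (complex_of_real (adj E k i) + (if k = i then \<i> else 0)) *
                          (complex_of_real (adj E k j) + (if k = j then \<i> else 0)))"

end

theory Submission
  imports Defs
begin

text \<open>For \<open>i \<noteq> j\<close>, \<open>Re a\<^sub>i\<^sub>j\<close> counts the common out-neighbours of \<open>i\<close> and \<open>j\<close>, and
  \<open>Im a\<^sub>i\<^sub>j = A\<^sub>i\<^sub>j + A\<^sub>j\<^sub>i\<close> records the edges between them. A common out-neighbour has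
  in-degree two in the union of the stars \<open>T\<^sub>i\<close> and \<open>T\<^sub>j\<close>, so the union is no pseudotree.
  Otherwise the union is a pseudotree as soon as \<open>j \<rightarrow> i\<close> is an edge, and then all of \<open>T\<^sub>i\<close>
  is reachable from \<open>j\<close>, the only root of \<open>T\<^sub>j\<close>; without that edge, \<open>i\<close> is unreachable
  from \<open>j\<close> in the union. The diagonal vanishes because a star shares its edges with itself.\<close>

lemma dpath_Cons:
  "dpath E (x # xs) \<longleftrightarrow> x \<notin> set xs \<and> (xs = [] \<or> (x, hd xs) \<in> E \<and> dpath E xs)"
proof (cases xs)
  case (Cons y ys)
  have "(\<forall>i. Suc i < length (x # xs) \<longrightarrow> ((x # xs) ! i, (x # xs) ! Suc i) \<in> E) \<longleftrightarrow>
        (x, y) \<in> E \<and> (\<forall>i. Suc i < length xs \<longrightarrow> (xs ! i, xs ! Suc i) \<in> E)"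
    using Cons by (auto simp: nth_Cons split: nat.split)
  then show ?thesis using Cons by (auto simp: dpath_def)
qed (simp add: dpath_def)

lemma dpath_appendD: "dpath E (xs @ ys) \<Longrightarrow> ys \<noteq> [] \<Longrightarrow> dpath E ys"
  by (induction xs) (auto simp: dpath_Cons)

lemma rtrancl_iff_dpath:
  "(a, b) \<in> E\<^sup>* \<longleftrightarrow> (\<exists>xs. dpath E xs \<and> hd xs = a \<and> last xs = b)"
proof
  assume "(a, b) \<in> E\<^sup>*"
  then show "\<exists>xs. dpath E xs \<and> hd xs = a \<and> last xs = b"
  proof (induction rule: converse_rtrancl_induct)
    case base
    show ?case by (rule exI[of _ "[b]"]) (simp add: dpath_def)
  next
    case (step a y)
    then obtain xs where xs: "dpath E xs" "hd xs = y" "last xs = b" by blast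
    then have "xs \<noteq> []" by (auto simp: dpath_def)
    show ?case
    proof (cases "a \<in> set xs")
      case True
      then obtain p q where "xs = p @ a # q" by (meson split_list)
      then show ?thesis using xs by (intro exI[of _ "a # q"]) (auto intro: dpath_appendD)
    next
      case False
      then show ?thesis using xs \<open>xs \<noteq> []\<close> step.hyps(1)
        by (intro exI[of _ "a # xs"]) (simp add: dpath_Cons)
    qed
  qed
next
  assume "\<exists>xs. dpath E xs \<and> hd xs = a \<and> last xs = b"
  then obtain xs where "dpath E xs" "hd xs = a" "last xs = b" by blast
  then show "(a, b) \<in> E\<^sup>*"
  proof (induction xs arbitrary: a)
    case (Cons x xs)
    then show ?case
      by (cases xs) (auto simp: dpath_Cons intro: converse_rtrancl_into_rtrancl)
  qed (simp add: dpath_def)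
qed

lemma weakly_connectedI_reachable:
  assumes "\<forall>v\<in>fst G. (c, v) \<in> (snd G)\<^sup>*"
  shows "weakly_connected G"
  unfolding weakly_connected_def
proof (intro ballI)
  fix u v assume "u \<in> fst G" "v \<in> fst G"
  let ?R = "snd G \<union> (snd G)\<inverse>"
  have "(snd G)\<^sup>* \<subseteq> ?R\<^sup>*" by (rule rtrancl_mono) blast
  then have "(c, u) \<in> ?R\<^sup>*" "(c, v) \<in> ?R\<^sup>*" using assms \<open>u \<in> fst G\<close> \<open>v \<in> fst G\<close> by auto
  moreover have "(?R\<^sup>*)\<inverse> = ?R\<^sup>*" by (simp add: rtrancl_converse[symmetric] converse_Un Un_commute)
  ultimately show "(u, v) \<in> ?R\<^sup>*" by (metis converseI rtrancl_trans)
qed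

lemma pseudotree_unique_in_neighbour:
  assumes "pseudotree T" "(u, w) \<in> snd T" "(v, w) \<in> snd T"
  shows "u = v"
proof -
  have T: "simple_dgraph T" "\<forall>v\<in>fst T. card {u. (u, v) \<in> snd T} \<le> 1"
    using assms(1) by (auto simp: pseudotree_def)
  then have "w \<in> fst T" "finite {u. (u, w) \<in> snd T}"
    using assms(2) by (auto simp: simple_dgraph_def intro: finite_subset[of _ "fst T"])
  then show ?thesis using T(2) assms(2,3) by (auto simp: card_le_Suc0_iff_eq)
qed

lemma pseudotreeI_reachable:
  assumes simple: "simple_dgraph T" and edge: "(c, d) \<in> snd T"
    and "\<forall>v\<in>fst T. (c, v) \<in> (snd T)\<^sup>*"
    and "\<And>u v w. (u, w) \<in> snd T \<Longrightarrow> (v, w) \<in> snd T \<Longrightarrow> u = v"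
  shows "pseudotree T"
proof -
  have "finite (fst T)" "{c, d} \<subseteq> fst T" "c \<noteq> d"
    using simple edge by (auto simp: simple_dgraph_def)
  then have "card (fst T) \<ge> 2" by (metis card_2_iff card_mono)
  moreover have "card {u. (u, w) \<in> snd T} \<le> 1" for w
    using assms(4) card_le_Suc0_iff_eq[of "{u. (u, w) \<in> snd T}"]
    by (cases "finite {u. (u, w) \<in> snd T}") auto
  ultimately show ?thesis
    using assms weakly_connectedI_reachable by (auto simp: pseudotree_def)
qed

lemma simple_dgraph_edgeD:
  "simple_dgraph (V, E) \<Longrightarrow> (a, b) \<in> E \<Longrightarrow> a \<in> V \<and> b \<in> V \<and> a \<noteq> b"
  by (auto simp: simple_dgraph_def)

lemma simple_dgraph_subgraph:
  "simple_dgraph (V, E) \<Longrightarrow> W \<subseteq> V \<Longrightarrow> F \<subseteq> E \<inter> W \<times> W \<Longrightarrow> simple_dgraph (W, F)"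
  by (auto simp: simple_dgraph_def intro: finite_subset)

lemma dpath_star_pt_iff:
  "dpath (snd (star_pt E k)) xs \<longleftrightarrow>
     (\<exists>x. xs = [x]) \<or> (\<exists>v. xs = [k, v] \<and> (k, v) \<in> E \<and> v \<noteq> k)"
proof (cases xs rule: remdups_adj.cases)
  case (3 x y zs)
  then show ?thesis by (cases zs) (auto simp: dpath_Cons star_pt_def)
qed (auto simp: dpath_Cons dpath_def star_pt_def)

lemma roots_star_pt: "roots (star_pt E k) = {k}"
proof -
  have "r \<notin> roots (star_pt E k)" if "r \<noteq> k" for r
  proof -
    have "\<not> (dpath (snd (star_pt E k)) xs \<and> hd xs = r \<and> last xs = k)" for xs
      using \<open>r \<noteq> k\<close> by (cases xs) (auto simp: dpath_star_pt_iff)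
    then show ?thesis using \<open>r \<noteq> k\<close> by (auto simp: roots_def star_pt_def)
  qed
  moreover have "\<exists>!xs. dpath (snd (star_pt E k)) xs \<and> hd xs = k \<and> last xs = v"
    if "(k, v) \<in> E" "v \<noteq> k" for v
  proof (rule ex1I[of _ "[k, v]"])
    show "dpath (snd (star_pt E k)) [k, v] \<and> hd [k, v] = k \<and> last [k, v] = v"
      using that by (simp add: dpath_star_pt_iff)
  next
    fix xs assume "dpath (snd (star_pt E k)) xs \<and> hd xs = k \<and> last xs = v"
    then show "xs = [k, v]"
      using that unfolding dpath_star_pt_iff by (elim conjE disjE exE) simp_all
  qed
  then have "k \<in> roots (star_pt E k)" by (auto simp: roots_def star_pt_def)
  ultimately show ?thesis by blast
qed

lemma pseudotree_star_pt:
  assumes simple: "simple_dgraph (V, E)" and "(k, u) \<in> E"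
  shows "pseudotree (star_pt E k)"
proof (rule pseudotreeI_reachable[where c = k and d = u])
  show "simple_dgraph (star_pt E k)"
    using simple_dgraph_edgeD[OF simple] assms(2) unfolding star_pt_def
    by (intro simple_dgraph_subgraph[OF simple]) auto
qed (use assms(2) in \<open>auto simp: star_pt_def\<close>)

lemma disjoint_pt_star_pt: "i \<noteq> j \<Longrightarrow> disjoint_pt (star_pt E i) (star_pt E j)"
  by (auto simp: disjoint_pt_def star_pt_def)

lemma char_entry_self: "snd T \<noteq> {} \<Longrightarrow> fst T \<noteq> {} \<Longrightarrow> char_entry T T = CM_Zero"
  by (auto simp: char_entry_def mergeable_def disjoint_pt_def)

lemma graph_union_star_pt:
  "graph_union (star_pt E i) (star_pt E j) = ({i, j} \<union> E `` {i, j}, {e \<in> E. fst e \<in> {i, j}})"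
  by (auto simp: graph_union_def star_pt_def)

lemma pseudotree_graph_union_star_pt:
  assumes simple: "simple_dgraph (V, E)" and "(j, i) \<in> E"
    and no_common: "\<nexists>w. (i, w) \<in> E \<and> (j, w) \<in> E"
  shows "pseudotree (graph_union (star_pt E i) (star_pt E j))"
  unfolding graph_union_star_pt
proof (rule pseudotreeI_reachable[where c = j and d = i])
  show "simple_dgraph ({i, j} \<union> E `` {i, j}, {e \<in> E. fst e \<in> {i, j}})"
    using simple_dgraph_edgeD[OF simple] assms(2)
    by (intro simple_dgraph_subgraph[OF simple]) auto
qed (use assms(2) no_common in \<open>auto intro: rtrancl_into_rtrancl[OF r_into_rtrancl]\<close>)

lemma mergeable_star_pt_iff:
  assumes simple: "simple_dgraph (V, E)" and "(i, u) \<in> E" "(j, w) \<in> E" "i \<noteq> j"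
  shows "mergeable (star_pt E i) (star_pt E j) \<longleftrightarrow>
           (j, i) \<in> E \<and> (\<nexists>w. (i, w) \<in> E \<and> (j, w) \<in> E)"
proof -
  let ?U = "graph_union (star_pt E i) (star_pt E j)"
  have mergeable_iff: "mergeable (star_pt E i) (star_pt E j) \<longleftrightarrow>
      fst (star_pt E i) \<inter> fst (star_pt E j) \<noteq> {} \<and> pseudotree ?U \<and>
      (\<forall>v\<in>fst (star_pt E i). (j, v) \<in> (snd ?U)\<^sup>*)"
    using pseudotree_star_pt[OF simple assms(2)] pseudotree_star_pt[OF simple assms(3)] assms(4)
    by (simp add: mergeable_def disjoint_pt_star_pt roots_star_pt rtrancl_iff_dpath)
  have i_in: "i \<in> fst (star_pt E i)" by (simp add: star_pt_def)
  have reach: "(j, v) \<in> (snd ?U)\<^sup>* \<Longrightarrow> v = j \<or> (j, v) \<in> E" if "(j, i) \<notin> E" for v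
  proof (induction rule: rtrancl_induct)
    case (step y z)
    then have "(y, z) \<in> E" "y = i \<or> y = j" by (simp_all add: graph_union_star_pt)
    then show ?case using step.IH that by blast
  qed simp
  show ?thesis
  proof
    assume "mergeable (star_pt E i) (star_pt E j)"
    then have U: "pseudotree ?U" and "(j, i) \<in> (snd ?U)\<^sup>*"
      using i_in mergeable_iff by blast+
    then have "(j, i) \<in> E" using reach \<open>i \<noteq> j\<close> by blast
    moreover have "i = j" if "(i, v) \<in> E" "(j, v) \<in> E" for v
    proof (rule pseudotree_unique_in_neighbour[OF U])
      show "(i, v) \<in> snd ?U" "(j, v) \<in> snd ?U" using that by (simp_all add: graph_union_star_pt)
    qed
    ultimately show "(j, i) \<in> E \<and> (\<nexists>w. (i, w) \<in> E \<and> (j, w) \<in> E)"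
      using \<open>i \<noteq> j\<close> by blast
  next
    assume merge_cond: "(j, i) \<in> E \<and> (\<nexists>w. (i, w) \<in> E \<and> (j, w) \<in> E)"
    have "(j, v) \<in> (snd ?U)\<^sup>*" if "v \<in> fst (star_pt E i)" for v
    proof -
      have "(j, i) \<in> snd ?U" using merge_cond by (simp add: graph_union_star_pt)
      moreover have "v = i \<or> (i, v) \<in> E" using that by (simp add: star_pt_def)
      then have "v = i \<or> (i, v) \<in> snd ?U" by (auto simp: graph_union_star_pt)
      ultimately show ?thesis by (meson converse_rtrancl_into_rtrancl r_into_rtrancl)
    qed
    moreover have "i \<in> fst (star_pt E j)" using merge_cond by (simp add: star_pt_def)
    ultimately show "mergeable (star_pt E i) (star_pt E j)"
      using i_in mergeable_iff pseudotree_graph_union_star_pt[OF simple] merge_cond by blast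
  qed
qed

lemma char_entry_star_pt:
  assumes "simple_dgraph (V, E)" and "(i, u) \<in> E" "(j, w) \<in> E" "i \<noteq> j"
  shows "char_entry (star_pt E i) (star_pt E j) =
           (if \<exists>w. (i, w) \<in> E \<and> (j, w) \<in> E then CM_Zero
            else if (j, i) \<in> E then CM_One
            else if (i, j) \<in> E then CM_Zero
            else CM_Empty)"
  using assms(4) unfolding char_entry_def mergeable_star_pt_iff[OF assms]
  by (auto simp: star_pt_def)

lemma Re_aval:
  assumes "i \<noteq> j"
  shows "Re (aval N E i j) = card {w. w < N \<and> (i, w) \<in> E \<and> (j, w) \<in> E}"
proof -
  have "Re (aval N E i j) = (\<Sum>w<N. if (i, w) \<in> E \<and> (j, w) \<in> E then 1 else 0)"
    unfolding aval_def Re_sum using assms by (intro sum.cong) (auto simp: adj_def)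
  also have "\<dots> = card {w. w < N \<and> (i, w) \<in> E \<and> (j, w) \<in> E}"
    by (simp add: sum.If_cases lessThan_def Collect_conj_eq)
  finally show ?thesis .
qed

lemma Im_aval:
  assumes "i \<noteq> j" "i < N" "j < N"
  shows "Im (aval N E i j) = adj E j i + adj E i j"
proof -
  have "Im (aval N E i j) =
          (\<Sum>k<N. (if k = j then adj E k i else 0) + (if k = i then adj E k j else 0))"
    unfolding aval_def Im_sum using assms by (intro sum.cong) auto
  also have "\<dots> = adj E j i + adj E i j"
    using assms by (simp add: sum.distrib)
  finally show ?thesis .
qed

lemma char_entry_star_pt_aval:
  assumes simple: "simple_dgraph ({0..<N}, E)" and "(i, u) \<in> E" "(j, w) \<in> E" "i \<noteq> j"
  shows "char_entry (star_pt E i) (star_pt E j) =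
           (if Re (aval N E i j) \<noteq> 0 then CM_Zero
            else if Im (aval N E i j) = 0 then CM_Empty
            else if adj E i j \<noteq> 0 then CM_One
            else CM_Zero)"
proof -
  have edge_bound: "a < N \<and> b < N" if "(a, b) \<in> E" for a b
    using simple_dgraph_edgeD[OF simple that] by simp
  have "Re (aval N E i j) \<noteq> 0 \<longleftrightarrow> (\<exists>w. w < N \<and> (i, w) \<in> E \<and> (j, w) \<in> E)"
    unfolding Re_aval[OF assms(4)] by (auto simp: card_eq_0_iff)
  then have "Re (aval N E i j) \<noteq> 0 \<longleftrightarrow> (\<exists>w. (i, w) \<in> E \<and> (j, w) \<in> E)"
    using edge_bound by blast
  moreover have "Im (aval N E i j) \<noteq> 0 \<longleftrightarrow> (i, j) \<in> E \<or> (j, i) \<in> E"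
    using Im_aval[OF assms(4)] edge_bound assms(2,3) by (auto simp: adj_def)
  ultimately show ?thesis
    using char_entry_star_pt[OF assms] by (simp add: adj_def)
qed

theorem lemma5:
  fixes N :: nat and E :: "(nat \<times> nat) set"
  assumes simple: "simple_dgraph ({0..<N}, E)"
    and sinks_last: "\<forall>v<N. (v \<in> sinks N E \<longleftrightarrow> N - card (sinks N E) \<le> v)"
  shows "(\<forall>i < N - card (sinks N E). char_entry (star_pt E i) (star_pt E i) = CM_Zero) \<and>
         (\<forall>i < N - card (sinks N E). \<forall>j < N - card (sinks N E). j \<noteq> i \<longrightarrow>
            ((Re (aval N E i j) = 0 \<and> Im (aval N E i j) \<noteq> 0 \<and> adj E i j \<noteq> 0
                \<longrightarrow> char_entry (star_pt E i) (star_pt E j) = CM_One) \<and>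
             ((Re (aval N E i j) \<noteq> 0 \<or>
               (Re (aval N E i j) = 0 \<and> Im (aval N E i j) \<noteq> 0 \<and> adj E i j = 0))
                \<longrightarrow> char_entry (star_pt E i) (star_pt E j) = CM_Zero) \<and>
             (aval N E i j = 0 \<longrightarrow> char_entry (star_pt E i) (star_pt E j) = CM_Empty)))"
proof -
  let ?M = "N - card (sinks N E)"
  have out_edge: "\<exists>u. (i, u) \<in> E" if "i < ?M" for i
    using sinks_last[rule_format, of i] that by (auto simp: sinks_def)
  have diag: "char_entry (star_pt E i) (star_pt E i) = CM_Zero" if "i < ?M" for i
    using out_edge[OF that] by (intro char_entry_self) (auto simp: star_pt_def)
  have offdiag: "char_entry (star_pt E i) (star_pt E j) =
           (if Re (aval N E i j) \<noteq> 0 then CM_Zero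
            else if Im (aval N E i j) = 0 then CM_Empty
            else if adj E i j \<noteq> 0 then CM_One
            else CM_Zero)"
    if "i < ?M" "j < ?M" "j \<noteq> i" for i j
    using out_edge[OF that(1)] out_edge[OF that(2)] char_entry_star_pt_aval[OF simple] that(3)
    by metis
  show ?thesis
    using diag offdiag by (auto simp: complex_eq_iff)
qed

end
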